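(* For $\xi,X\in\mathbb R^2$ let $$I(\xi,X)=\Big\{\theta\in[-\pi/2,\pi/2]:\ \big\langle\xi,(I+A(\theta))^{-1}A'(\theta)X\big\rangle^2\ge\theta^2|X|^2|\xi|^2/128\Big\}.$$ Then for all $\xi,X\in\mathbb R^2$, either $(0,\pi/2]\subset I(\xi,X)$ or $[-\pi/2,0)\subset I(\xi,X)$.
   Context: $A(\theta)=\frac12(R_\theta-I)=\frac12\begin{pmatrix}\cos\theta-1&-\sin\theta\\ \sin\theta&\cos\theta-1\end{pmatrix}$, where $R_\theta$ is the rotation of angle $\theta$; $A'(\theta)$ is its derivative in $\theta$, and $I$ is the $2\times2$ identity matrix. *)

theory Defs
  imports "HOL-Analysis.Analysis"
begin

definition rot :: "real \<Rightarrow> real^2^2" where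
  "rot \<theta> = vector [vector [cos \<theta>, - sin \<theta>], vector [sin \<theta>, cos \<theta>]]"

definition Amat :: "real \<Rightarrow> real^2^2" where
  "Amat \<theta> = (1/2) *\<^sub>R (rot \<theta> - mat 1)"

text \<open>A'(theta): the entrywise derivative of A in theta.\<close>
definition Amat' :: "real \<Rightarrow> real^2^2" where
  "Amat' \<theta> = (1/2) *\<^sub>R vector [vector [- sin \<theta>, - cos \<theta>], vector [cos \<theta>, - sin \<theta>]]"

definition Iset :: "real^2 \<Rightarrow> real^2 \<Rightarrow> real set" where
  "Iset \<xi> X = {\<theta> \<in> {-pi/2..pi/2}.
     (\<xi> \<bullet> ((matrix_inv (mat 1 + Amat \<theta>) ** Amat' \<theta>) *v X))\<^sup>2
       \<ge> \<theta>\<^sup>2 * (norm X)\<^sup>2 * (norm \<xi>)\<^sup>2 / 128}"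

end

theory Submission
  imports Defs
begin

(*
  Write t = theta/2 and R_phi for the rotation by phi.  Both matrices in the
  integrand are scaled rotations:
      I + A(theta) = cos t * R_t,        A'(theta) = 1/2 * R_(theta + pi/2),
  so for |theta| < pi the matrix (I + A(theta))^-1 A'(theta) equals 1/(2 cos t) * R_(t + pi/2),
  and therefore
      <xi, (I + A)^-1 A' X> = (u - tan t * v) / 2,   u = xi_2 X_1 - xi_1 X_2,  v = <xi, X>,
  where u^2 + v^2 = |xi|^2 |X|^2 (Lagrange's identity in the plane).
  For |t| <= pi/4 we have t^2 <= tan^2 t <= 1, and if tan t * u * v <= 0 then
  (u - tan t * v)^2 >= tan^2 t * (u^2 + v^2).  Hence theta lies in I(xi, X) (even with the
  constant 1/16 instead of 1/128) whenever tan(theta/2) * u * v <= 0.  Since tan(theta/2) has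
  the sign of theta, this holds on all of (0, pi/2] if u v <= 0 and on all of [-pi/2, 0) if
  u v > 0, which is the theorem.
*)

lemma matrix_inv_eqI:
  fixes A B :: "'a::semiring_1^'n^'n"
  assumes "A ** B = mat 1" and "B ** A = mat 1"
  shows "matrix_inv A = B"
proof -
  have inv: "A ** matrix_inv A = mat 1 \<and> matrix_inv A ** A = mat 1"
    unfolding matrix_inv_def by (rule someI[of _ B]) (use assms in blast)
  have "matrix_inv A = matrix_inv A ** (A ** B)" using assms by simp
  also have "\<dots> = (matrix_inv A ** A) ** B" by (rule matrix_mul_assoc)
  also have "\<dots> = B" using inv by simp
  finally show ?thesis .
qed

lemma rot_add: "rot a ** rot b = rot (a + b)"
  by (simp add: rot_def vec_eq_iff forall_2 matrix_matrix_mult_def sum_2 sin_add cos_add algebra_simps)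

lemma rot_zero: "rot 0 = mat 1"
  by (simp add: rot_def vec_eq_iff forall_2 mat_def)

lemma id_plus_Amat: "mat 1 + Amat \<theta> = cos (\<theta>/2) *\<^sub>R rot (\<theta>/2)"
proof -
  have "cos \<theta> = 2 * (cos (\<theta>/2))\<^sup>2 - 1" using cos_double_cos[of "\<theta>/2"] by simp
  moreover have "sin \<theta> = 2 * sin (\<theta>/2) * cos (\<theta>/2)" using sin_double[of "\<theta>/2"] by simp
  ultimately show ?thesis
    by (simp add: Amat_def rot_def vec_eq_iff forall_2 mat_def power2_eq_square field_simps)
qed

lemma Amat'_rot: "Amat' \<theta> = (1/2) *\<^sub>R rot (\<theta> + pi/2)"
  by (simp add: Amat'_def rot_def vec_eq_iff forall_2 sin_add cos_add)

lemma inverse_scaled_rot: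
  assumes "c \<noteq> 0"
  shows "matrix_inv (c *\<^sub>R rot t) = (1/c) *\<^sub>R rot (- t)"
  by (rule matrix_inv_eqI)
    (use assms in \<open>simp_all add: matrix_scalar_ac scalar_matrix_assoc[symmetric] rot_add rot_zero\<close>)

lemma resolvent_derivative_rot:
  assumes "cos (\<theta>/2) \<noteq> 0"
  shows "matrix_inv (mat 1 + Amat \<theta>) ** Amat' \<theta> = (1 / (2 * cos (\<theta>/2))) *\<^sub>R rot (\<theta>/2 + pi/2)"
proof -
  have "matrix_inv (mat 1 + Amat \<theta>) ** Amat' \<theta>
        = ((1 / cos (\<theta>/2)) *\<^sub>R rot (- (\<theta>/2))) ** ((1/2) *\<^sub>R rot (\<theta> + pi/2))"
    by (simp only: id_plus_Amat inverse_scaled_rot[OF assms] Amat'_rot)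
  also have "\<dots> = (1 / (2 * cos (\<theta>/2))) *\<^sub>R rot (\<theta>/2 + pi/2)"
    by (simp add: matrix_scalar_ac scalar_matrix_assoc[symmetric] rot_add)
  finally show ?thesis .
qed

definition cross2 :: "real^2 \<Rightarrow> real^2 \<Rightarrow> real" where
  "cross2 \<xi> X = \<xi>$2 * X$1 - \<xi>$1 * X$2"

lemma lagrange_identity2: "(\<xi> \<bullet> X)\<^sup>2 + (cross2 \<xi> X)\<^sup>2 = (norm \<xi>)\<^sup>2 * (norm X)\<^sup>2"
  unfolding power2_norm_eq_inner
  by (simp add: cross2_def inner_vec_def sum_2 power2_eq_square algebra_simps)

lemma inner_rot: "\<xi> \<bullet> (rot \<phi> *v X) = cos \<phi> * (\<xi> \<bullet> X) + sin \<phi> * cross2 \<xi> X"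
  for \<xi> X :: "real^2"
  by (simp add: cross2_def rot_def inner_vec_def sum_2 matrix_vector_mult_def algebra_simps)

lemma inner_resolvent_derivative:
  fixes \<xi> X :: "real^2"
  assumes "cos (\<theta>/2) \<noteq> 0"
  shows "\<xi> \<bullet> ((matrix_inv (mat 1 + Amat \<theta>) ** Amat' \<theta>) *v X)
           = (cross2 \<xi> X - tan (\<theta>/2) * (\<xi> \<bullet> X)) / 2"
proof -
  have cos_shift: "cos (\<theta>/2 + pi/2) = - sin (\<theta>/2)"
    and sin_shift: "sin (\<theta>/2 + pi/2) = cos (\<theta>/2)" by (simp_all add: cos_add sin_add)
  show ?thesis
    unfolding resolvent_derivative_rot[OF assms] scaleR_matrix_vector_assoc[symmetric]
      inner_scaleR_right inner_rot cos_shift sin_shift tan_def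
    using assms by (simp add: field_simps)
qed

(* tan x >= x on [0, pi/2), since (tan x - x)' = 1/cos^2 x - 1 >= 0. *)
lemma tan_ge_self:
  fixes x :: real
  assumes "0 \<le> x" and "x < pi/2"
  shows "x \<le> tan x"
proof -
  have "tan 0 - 0 \<le> tan x - x"
  proof (rule DERIV_nonneg_imp_nondecreasing[OF assms(1)])
    fix y :: real assume y: "0 \<le> y" "y \<le> x"
    have cpos: "0 < cos y" using y assms by (intro cos_gt_zero_pi) auto
    have "(cos y)\<^sup>2 \<le> 1" by (simp add: abs_square_le_1)
    hence "0 \<le> inverse ((cos y)\<^sup>2) - 1" using cpos by (simp add: field_simps)
    moreover have "DERIV (\<lambda>y. tan y - y) y :> inverse ((cos y)\<^sup>2) - 1"
      using cpos by (auto intro!: derivative_eq_intros)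
    ultimately show "\<exists>d. DERIV (\<lambda>y. tan y - y) y :> d \<and> 0 \<le> d" by blast
  qed
  thus ?thesis by simp
qed

lemma tan_sq_bounds:
  fixes x :: real
  assumes "\<bar>x\<bar> \<le> pi/4"
  shows "x\<^sup>2 \<le> (tan x)\<^sup>2" and "(tan x)\<^sup>2 \<le> 1"
proof -
  have ax: "\<bar>x\<bar> < pi/2" using assms pi_gt_zero by linarith
  have abs_tan: "\<bar>tan x\<bar> = tan \<bar>x\<bar>"
    by (cases "0 \<le> x") (use ax tan_pos_pi2_le[of "\<bar>x\<bar>"] in auto)
  have "\<bar>x\<bar> \<le> \<bar>tan x\<bar>" unfolding abs_tan using ax by (intro tan_ge_self) auto
  thus "x\<^sup>2 \<le> (tan x)\<^sup>2" by (simp add: abs_le_square_iff)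
  have "tan \<bar>x\<bar> \<le> tan (pi/4)" by (rule tan_mono_le) (use assms pi_gt_zero abs_ge_zero[of x] in linarith)+
  hence "\<bar>tan x\<bar> \<le> 1" unfolding abs_tan by (simp add: tan_45)
  thus "(tan x)\<^sup>2 \<le> 1" by (simp add: abs_square_le_1)
qed

(* If tau u v <= 0 the cross term in (u - tau v)^2 is nonnegative, and tau^2 <= 1 controls u^2. *)
lemma sq_diff_lower_bound:
  fixes \<tau> u v :: real
  assumes "\<tau> * u * v \<le> 0" and "\<tau>\<^sup>2 \<le> 1"
  shows "\<tau>\<^sup>2 * (u\<^sup>2 + v\<^sup>2) \<le> (u - \<tau> * v)\<^sup>2"
proof -
  have "\<tau>\<^sup>2 * u\<^sup>2 \<le> u\<^sup>2" using assms(2) by (simp add: mult_left_le_one_le)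
  moreover have "(u - \<tau> * v)\<^sup>2 = u\<^sup>2 + \<tau>\<^sup>2 * v\<^sup>2 - 2 * (\<tau> * u * v)"
    by (simp add: power2_eq_square algebra_simps)
  ultimately show ?thesis using assms(1) by (simp add: algebra_simps)
qed

lemma mem_Iset_if_sign:
  fixes \<xi> X :: "real^2"
  assumes \<theta>: "\<theta> \<in> {-pi/2..pi/2}"
    and sign: "tan (\<theta>/2) * cross2 \<xi> X * (\<xi> \<bullet> X) \<le> 0"
  shows "\<theta> \<in> Iset \<xi> X"
proof -
  define \<tau> where "\<tau> = tan (\<theta>/2)"
  define u where "u = cross2 \<xi> X"
  define v where "v = \<xi> \<bullet> X"
  have lo: "- (pi/2) \<le> \<theta>" and hi: "\<theta> \<le> pi/2" using \<theta> by auto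
  have half: "\<bar>\<theta>/2\<bar> \<le> pi/4" using lo hi by linarith
  have "- (pi/2) < \<theta>/2" and "\<theta>/2 < pi/2" using lo hi pi_gt_zero by linarith+
  hence "cos (\<theta>/2) \<noteq> 0" by (metis cos_gt_zero_pi less_irrefl)
  hence entry: "\<xi> \<bullet> ((matrix_inv (mat 1 + Amat \<theta>) ** Amat' \<theta>) *v X) = (u - \<tau> * v) / 2"
    unfolding u_def v_def \<tau>_def by (rule inner_resolvent_derivative)
  have norms: "(norm X)\<^sup>2 * (norm \<xi>)\<^sup>2 = u\<^sup>2 + v\<^sup>2"
    using lagrange_identity2[of \<xi> X] unfolding u_def v_def by (simp add: mult.commute)
  have "\<theta>\<^sup>2 * (norm X)\<^sup>2 * (norm \<xi>)\<^sup>2 / 128 \<le> (\<theta>/2)\<^sup>2 * (u\<^sup>2 + v\<^sup>2) / 4"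
    unfolding mult.assoc norms by (simp add: power_divide)
  also have "\<dots> \<le> \<tau>\<^sup>2 * (u\<^sup>2 + v\<^sup>2) / 4"
    using tan_sq_bounds(1)[OF half] unfolding \<tau>_def by (intro divide_right_mono mult_right_mono) auto
  also have "\<dots> \<le> (u - \<tau> * v)\<^sup>2 / 4"
    using sq_diff_lower_bound[of \<tau> u v] sign tan_sq_bounds(2)[OF half]
    unfolding \<tau>_def u_def v_def by simp
  also have "\<dots> = (\<xi> \<bullet> ((matrix_inv (mat 1 + Amat \<theta>) ** Amat' \<theta>) *v X))\<^sup>2"
    unfolding entry by (simp add: power_divide)
  finally show ?thesis using \<theta> unfolding Iset_def by simp
qed

theorem lemma4p7:
  fixes \<xi> X :: "real^2"
  shows "{0<..pi/2} \<subseteq> Iset \<xi> X \<or> {-pi/2..<0} \<subseteq> Iset \<xi> X"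
proof (cases "cross2 \<xi> X * (\<xi> \<bullet> X) \<le> 0")
  case True
  have "\<theta> \<in> Iset \<xi> X" if "\<theta> \<in> {0<..pi/2}" for \<theta>
  proof (rule mem_Iset_if_sign)
    show "\<theta> \<in> {-pi/2..pi/2}" using that pi_gt_zero by auto
    have "0 < tan (\<theta>/2)" using that pi_gt_zero by (intro tan_gt_zero) auto
    thus "tan (\<theta>/2) * cross2 \<xi> X * (\<xi> \<bullet> X) \<le> 0"
      using True by (simp add: mult.assoc mult_nonneg_nonpos)
  qed
  thus ?thesis by blast
next
  case False
  have "\<theta> \<in> Iset \<xi> X" if "\<theta> \<in> {-pi/2..<0}" for \<theta>
  proof (rule mem_Iset_if_sign)
    show "\<theta> \<in> {-pi/2..pi/2}" using that pi_gt_zero by auto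
    have "tan (\<theta>/2) < 0" using that pi_gt_zero by (intro tan_less_zero) auto
    thus "tan (\<theta>/2) * cross2 \<xi> X * (\<xi> \<bullet> X) \<le> 0"
      using False by (simp add: mult.assoc mult_nonpos_nonneg)
  qed
  thus ?thesis by blast
qed

end
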